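(* Let $p$ be an odd prime and $\mathbf{k}=(k_1,k_2)$ with $k_1>k_2>0$. Let $a,c$ be positive integers with $0<k_1c\le p-1$ and $a+(k_1-1)c<p-1$. Then $$(a,\;p-1-(a+(k_1-1)c),\;(k_1-k_2+1)c-1,\;c)\in\mathcal{A}_{\mathbf{k}}.$$
   Context: Define, for integers $a,b_1,b_2,c$, the formal expression $$R_{\mathbf{k}}(a,b_1,b_2,c)=(-1)^{k_1+k_2}\prod_{i=1}^{k_1-k_2}\frac{(b_1+(i-1)c)!}{(1+a+b_1+(i+k_1-2)c-p)!}\prod_{i=1}^{k_2}\frac{(b_2+(i-1)c)!}{(1+b_2+(i+k_2-k_1-2)c)!}\cdot\frac{(1+b_1+b_2+(i-2)c)!}{(2+a+b_1+b_2+(i+k_1-3)c-p)!}$$ $$\times\prod_{i=1}^{k_1}(a+(i-1)c)!\prod_{i=1}^{k_2}(p+(i-k_1-1)c)!\prod_{r=1}^2\prod_{i=1}^{k_r}\frac{(ic)!}{c!}.$$ $\mathcal{A}_{\mathbf{k}}$ is the set of $(a,b_1,b_2,c)\in\mathbb{Z}_{>0}^4$ with $a+(k_1-1)c<p-1$ such that every factorial $x!$ appearing in this expression satisfies $0\le x<p$. *)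

theory Defs
  imports "HOL-Computational_Algebra.Primes"
begin

text \<open>The multiset of arguments x of all factorials x! occurring in the expression
  R_k(a,b1,b2,c) (numerators and denominators), for k = (k1,k2), as integers.\<close>
definition fact_args :: "int \<Rightarrow> nat \<Rightarrow> nat \<Rightarrow> int \<Rightarrow> int \<Rightarrow> int \<Rightarrow> int \<Rightarrow> int set" where
  "fact_args p k1 k2 a b1 b2 c =
     (\<Union>i\<in>{1..int k1 - int k2}. {b1 + (i-1)*c, 1 + a + b1 + (i + int k1 - 2)*c - p})
   \<union> (\<Union>i\<in>{1..int k2}. {b2 + (i-1)*c, 1 + b2 + (i + int k2 - int k1 - 2)*c,
                           1 + b1 + b2 + (i-2)*c, 2 + a + b1 + b2 + (i + int k1 - 3)*c - p})
   \<union> (\<lambda>i. a + (i-1)*c) ` {1..int k1}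
   \<union> (\<lambda>i. p + (i - int k1 - 1)*c) ` {1..int k2}
   \<union> (\<Union>r\<in>{k1,k2}. (\<Union>i\<in>{1..int r}. {i*c, c}))"

definition A_set :: "int \<Rightarrow> nat \<Rightarrow> nat \<Rightarrow> (int \<times> int \<times> int \<times> int) set" where
  "A_set p k1 k2 = {(a,b1,b2,c). a > 0 \<and> b1 > 0 \<and> b2 > 0 \<and> c > 0 \<and>
      a + (int k1 - 1)*c < p - 1 \<and>
      (\<forall>x\<in>fact_args p k1 k2 a b1 b2 c. 0 \<le> x \<and> x < p)}"

end

theory Submission
  imports Defs
begin

text \<open>At b1 = p - 1 - (a + (k1 - 1) c), b2 = (k1 - k2 + 1) c - 1 every factorial argument
  of R_k has one of the five forms j c, j c - 1, p - j c, a + j c, p - 1 - a - j c with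
  0 \<le> j \<le> k1. The hypotheses k1 c \<le> p - 1 and a + (k1 - 1) c < p - 1 are exactly what
  keeps each of these progressions inside [0, p).\<close>

lemma fact_args_at_boundary_cases:
  fixes p a c x :: int
  assumes "k2 \<le> k1"
    and "x \<in> fact_args p k1 k2 a (p - 1 - (a + (int k1 - 1) * c)) ((int k1 - int k2 + 1) * c - 1) c"
  obtains (mult) j where "0 \<le> j" "j \<le> int k1" "x = j * c"
    | (mult_pred) j where "1 \<le> j" "j \<le> int k1" "x = j * c - 1"
    | (p_minus) j where "1 \<le> j" "j \<le> int k1" "x = p - j * c"
    | (a_plus) j where "0 \<le> j" "j < int k1" "x = a + j * c"
    | (p_pred_minus) j where "0 \<le> j" "j < int k1" "x = p - 1 - a - j * c"
proof -
  define K1 K2 where "K1 = int k1" and "K2 = int k2"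
  have K: "K2 \<le> K1" using assms(1) by (simp add: K1_def K2_def)
  from assms(2) consider
      (b1_term) i where "1 \<le> i" "i \<le> K1 - K2" "x = p - 1 - a - (K1 - i) * c"
    | (b1_denom) i where "1 \<le> i" "i \<le> K1 - K2" "x = (i - 1) * c"
    | (b2_term) i where "1 \<le> i" "i \<le> K2" "x = (K1 - K2 + i) * c - 1"
    | (b2_denom) i where "1 \<le> i" "i \<le> K2" "x = (i - 1) * c"
    | (b1_b2_term) i where "1 \<le> i" "i \<le> K2" "x = p - 1 - a - (K2 - i) * c"
    | (b1_b2_denom) i where "1 \<le> i" "i \<le> K2" "x = (i + K1 - K2 - 1) * c"
    | (a_term) i where "1 \<le> i" "i \<le> K1" "x = a + (i - 1) * c"
    | (p_term) i where "1 \<le> i" "i \<le> K2" "x = p - (K1 + 1 - i) * c"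
    | (multiple) i where "1 \<le> i" "i \<le> K1" "x = i * c"
    | (step) "1 \<le> K1" "x = c"
    unfolding fact_args_def K1_def[symmetric] K2_def[symmetric]
    using K by (auto simp: algebra_simps K1_def[symmetric] K2_def[symmetric])
  then show thesis
  proof cases
    case b1_term then show thesis using p_pred_minus[of "K1 - i"] K by (simp add: K1_def K2_def)
  next
    case b1_denom then show thesis using mult[of "i - 1"] K by (simp add: K1_def K2_def)
  next
    case b2_term then show thesis using mult_pred[of "K1 - K2 + i"] K by (simp add: K1_def K2_def)
  next
    case b2_denom then show thesis using mult[of "i - 1"] K by (simp add: K1_def K2_def)
  next
    case b1_b2_term then show thesis using p_pred_minus[of "K2 - i"] K by (simp add: K1_def K2_def)
  next
    case b1_b2_denom then show thesis using mult[of "i + K1 - K2 - 1"] K by (simp add: K1_def K2_def)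
  next
    case a_term then show thesis using a_plus[of "i - 1"] K by (simp add: K1_def K2_def)
  next
    case p_term then show thesis using p_minus[of "K1 + 1 - i"] K by (simp add: K1_def K2_def)
  next
    case multiple then show thesis using mult[of i] K by (simp add: K1_def K2_def)
  next
    case step then show thesis using mult[of 1] K by (simp add: K1_def K2_def)
  qed
qed

lemma fact_args_at_boundary_bounded:
  fixes p a c x :: int
  assumes "k2 \<le> k1" and "0 \<le> a" and "0 < c"
    and "int k1 * c \<le> p - 1" and "a + (int k1 - 1) * c < p - 1"
    and "x \<in> fact_args p k1 k2 a (p - 1 - (a + (int k1 - 1) * c)) ((int k1 - int k2 + 1) * c - 1) c"
  shows "0 \<le> x \<and> x < p"
  using assms(1,6)
proof (cases rule: fact_args_at_boundary_cases)
  case (mult j)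
  have "0 \<le> j * c" "j * c \<le> int k1 * c"
    using mult assms(3) by (intro mult_right_mono mult_nonneg_nonneg; simp)+
  then show ?thesis using mult assms(3,4) by linarith
next
  case (mult_pred j)
  have "1 * c \<le> j * c" "j * c \<le> int k1 * c"
    using mult_pred assms(3) by (intro mult_right_mono; simp)+
  then show ?thesis using mult_pred assms(3,4) by linarith
next
  case (p_minus j)
  have "1 * c \<le> j * c" "j * c \<le> int k1 * c"
    using p_minus assms(3) by (intro mult_right_mono; simp)+
  then show ?thesis using p_minus assms(3,4) by linarith
next
  case (a_plus j)
  have "0 \<le> j * c" "j * c \<le> (int k1 - 1) * c"
    using a_plus assms(3) by (intro mult_right_mono mult_nonneg_nonneg; simp)+
  then show ?thesis using a_plus assms(2,5) by linarith
next
  case (p_pred_minus j)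
  have "0 \<le> j * c" "j * c \<le> (int k1 - 1) * c"
    using p_pred_minus assms(3) by (intro mult_right_mono mult_nonneg_nonneg; simp)+
  then show ?thesis using p_pred_minus assms(2,5) by linarith
qed

theorem lemma5p5:
  fixes p a c :: int and k1 k2 :: nat
  assumes "prime p" and "odd p"
    and "k1 > k2" and "k2 > 0"
    and "a > 0" and "c > 0"
    and "0 < int k1 * c" and "int k1 * c \<le> p - 1"
    and "a + (int k1 - 1) * c < p - 1"
  shows "(a, p - 1 - (a + (int k1 - 1) * c), (int k1 - int k2 + 1) * c - 1, c) \<in> A_set p k1 k2"
proof -
  have "2 * c \<le> (int k1 - int k2 + 1) * c"
    using assms(3,6) by (intro mult_right_mono) auto
  then have b2_pos: "(int k1 - int k2 + 1) * c - 1 > 0"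
    using assms(6) by linarith
  have "\<forall>x \<in> fact_args p k1 k2 a (p - 1 - (a + (int k1 - 1) * c)) ((int k1 - int k2 + 1) * c - 1) c.
          0 \<le> x \<and> x < p"
    using fact_args_at_boundary_bounded[OF less_imp_le[OF assms(3)] less_imp_le[OF assms(5)] assms(6,8,9)]
    by blast
  with b2_pos assms(5,6,9) show ?thesis
    unfolding A_set_def by simp
qed

end
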